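(* For $k\in\mathbb{Z}_{\geq 0}$ let $!k=k!\sum_{\ell=0}^{k}\frac{(-1)^{\ell}}{\ell!}$ denote the $k$-th derangement number. Consider the formal series $$S_{\gamma}=\sum_{k=1}^{\infty}\frac{(-1)^{k}\,(!k)}{k},\qquad S_{\delta}=\sum_{k=1}^{\infty}(-1)^{k-1}(k-1)!,$$ and, for $\alpha\in\mathbb{R}$, the formal series $S(\alpha)=S_{\gamma}+\alpha S_{\delta}$, i.e. the series $\sum_{k=1}^{\infty}\left[\frac{(-1)^{k}\,(!k)}{k}+\alpha(-1)^{k-1}(k-1)!\right]$. Then $S(\alpha)$ is a conventionally convergent series if and only if $\alpha=1/e$.
   Context: Both $S_{\gamma}$ and $S_{\delta}$ are divergent series (in the conventional sense); they are Borel-summable to the Euler–Mascheroni constant $\gamma$ and the Euler–Gompertz constant $\delta=\int_0^\infty e^{-t}/(t+1)\,dt$, respectively. "Conventionally convergent" means convergent as an ordinary series of real numbers (convergence of the sequence of partial sums), with the linear combination $S_\gamma+\alpha S_\delta$ formed term by term. *)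

theory Defs
  imports "HOL-Analysis.Analysis"
begin

definition derangement :: "nat \<Rightarrow> real" where
  "derangement k = fact k * (\<Sum>l\<le>k. (-1) ^ l / fact l)"

definition S_gamma_term :: "nat \<Rightarrow> real" where
  "S_gamma_term k = (-1) ^ k * derangement k / real k"

definition S_delta_term :: "nat \<Rightarrow> real" where
  "S_delta_term k = (-1) ^ (k - 1) * fact (k - 1)"

definition S_alpha_term :: "real \<Rightarrow> nat \<Rightarrow> real" where
  "S_alpha_term \<alpha> k = S_gamma_term k + \<alpha> * S_delta_term k"

end

theory Submission
  imports Defs
begin

text \<open>The k-th term of S(alpha) is (-1)^k (k-1)! (!k/k! - alpha), and !k/k! is the k-th partial
  sum of the alternating series for 1/e, with error at most 1/(k+1)!. If the series converges
  its terms tend to 0, so !k/k! - alpha = o(1/(k-1)!) forces alpha = 1/e. Conversely for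
  alpha = 1/e the k-th term is bounded by (k-1)!/(k+1)! \<le> 1/k^2.\<close>

lemma abs_suminf_alternating_minus_sum_le:
  fixes a :: "nat \<Rightarrow> real"
  assumes "a \<longlonglongrightarrow> 0" and "\<And>n. 0 \<le> a n" and "\<And>n. a (Suc n) \<le> a n"
  shows "\<bar>(\<Sum>i. (-1) ^ i * a i) - (\<Sum>i<n. (-1) ^ i * a i)\<bar> \<le> a n"
proof -
  have tail_zero: "(\<lambda>i. a (i + n)) \<longlonglongrightarrow> 0"
    using assms(1) by (rule LIMSEQ_ignore_initial_segment)
  have tail_antimono: "a (Suc i + n) \<le> a (i + n)" for i
    using assms(3) by simp
  note tail = summable_Leibniz'[of "\<lambda>i. a (i + n)", OF tail_zero assms(2) tail_antimono]
  have summable_alternating: "summable (\<lambda>i. (-1) ^ i * a i)"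
    by (rule summable_Leibniz'(1)[of a, OF assms])
  define T where "T = (\<Sum>i. (-1) ^ i * a (i + n))"
  have T_bounds: "0 \<le> T" "T \<le> a n"
    using tail(2)[of 0] tail(4)[of 0] by (simp_all add: T_def)
  have "(\<Sum>i. (-1) ^ i * a i) - (\<Sum>i<n. (-1) ^ i * a i) = (\<Sum>i. (-1) ^ (i + n) * a (i + n))"
    using suminf_minus_initial_segment[OF summable_alternating, of n] by simp
  also have "\<dots> = (-1) ^ n * T"
    unfolding T_def power_add
    using suminf_mult[OF tail(1), of "(-1) ^ n"] by (simp add: algebra_simps)
  finally show ?thesis
    using T_bounds by (simp add: abs_mult)
qed

lemma sums_exp_minus_one: "(\<lambda>l. (-1) ^ l / fact l) sums exp (-1 :: real)"
  using exp_converges[of "-1 :: real"] by (simp add: divide_inverse mult.commute)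

lemma derangement_div_fact: "derangement k / fact k = (\<Sum>l<Suc k. (-1) ^ l / fact l)"
  by (simp add: derangement_def lessThan_Suc_atMost)

lemma derangement_div_fact_tendsto: "(\<lambda>k. derangement k / fact k) \<longlonglongrightarrow> exp (-1)"
proof -
  have "(\<lambda>k. \<Sum>l<k. (-1) ^ l / fact l) \<longlonglongrightarrow> exp (-1 :: real)"
    using sums_exp_minus_one by (simp add: sums_def)
  then show ?thesis
    unfolding derangement_div_fact by (rule LIMSEQ_Suc)
qed

lemma abs_derangement_div_fact_minus_exp_le:
  "\<bar>derangement k / fact k - exp (-1)\<bar> \<le> 1 / fact (Suc k)"
proof -
  have inverse_fact_zero: "(\<lambda>l. 1 / fact l :: real) \<longlonglongrightarrow> 0"
    using summable_LIMSEQ_zero[OF summable_exp[of 1]] by (simp add: divide_inverse)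
  have inverse_fact_nonneg: "0 \<le> (1 / fact l :: real)" for l
    by simp
  have inverse_fact_antimono: "1 / fact (Suc l) \<le> (1 / fact l :: real)" for l
    by (intro divide_left_mono fact_mono) auto
  have "exp (-1) = (\<Sum>l. (-1) ^ l * (1 / fact l :: real))"
    using sums_unique[OF sums_exp_minus_one] by simp
  moreover have "derangement k / fact k = (\<Sum>l<Suc k. (-1) ^ l * (1 / fact l :: real))"
    by (simp add: derangement_div_fact)
  ultimately show ?thesis
    using abs_suminf_alternating_minus_sum_le[of "\<lambda>l. 1 / fact l" "Suc k",
        OF inverse_fact_zero inverse_fact_nonneg inverse_fact_antimono]
    by (simp add: abs_minus_commute)
qed

lemma S_alpha_term_Suc:
  "S_alpha_term \<alpha> (Suc n) = (-1) ^ Suc n * fact n * (derangement (Suc n) / fact (Suc n) - \<alpha>)"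
proof -
  have "S_gamma_term (Suc n) = (-1) ^ Suc n * (fact n * (derangement (Suc n) / fact (Suc n)))"
    unfolding S_gamma_term_def fact_Suc by (simp del: of_nat_Suc)
  then show ?thesis
    unfolding S_alpha_term_def S_delta_term_def by (simp add: algebra_simps)
qed

lemma abs_S_alpha_term_Suc:
  "\<bar>S_alpha_term \<alpha> (Suc n)\<bar> = fact n * \<bar>derangement (Suc n) / fact (Suc n) - \<alpha>\<bar>"
  by (simp add: S_alpha_term_Suc abs_mult)

lemma summable_S_alpha_term_exp_minus_one:
  "summable (\<lambda>n. S_alpha_term (exp (-1)) (Suc n))"
proof (rule summable_comparison_test)
  have "summable (\<lambda>n. inverse (real n ^ 2))"
    by (rule inverse_power_summable) simp
  then show "summable (\<lambda>n. inverse (real (Suc n) ^ 2))"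
    by (rule summable_Suc_iff[THEN iffD2])
  show "\<exists>N. \<forall>n\<ge>N. norm (S_alpha_term (exp (-1)) (Suc n)) \<le> inverse (real (Suc n) ^ 2)"
  proof (intro exI allI impI)
    fix n :: nat
    have "norm (S_alpha_term (exp (-1)) (Suc n)) \<le> fact n * (1 / fact (Suc (Suc n)))"
      unfolding real_norm_def abs_S_alpha_term_Suc
      by (intro mult_left_mono abs_derangement_div_fact_minus_exp_le) simp
    also have "\<dots> = 1 / (real (Suc n) * real (Suc (Suc n)))"
      unfolding fact_Suc by (simp del: of_nat_Suc)
    also have "\<dots> \<le> inverse (real (Suc n) ^ 2)"
      unfolding inverse_eq_divide by (intro divide_left_mono) (simp_all add: power2_eq_square)
    finally show "norm (S_alpha_term (exp (-1)) (Suc n)) \<le> inverse (real (Suc n) ^ 2)" .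
  qed
qed

lemma summable_S_alpha_term_imp_eq_exp_minus_one:
  assumes "summable (\<lambda>n. S_alpha_term \<alpha> (Suc n))"
  shows "\<alpha> = exp (-1)"
proof -
  have "(\<lambda>n. derangement (Suc n) / fact (Suc n) - \<alpha>) \<longlonglongrightarrow> 0"
  proof (rule Lim_null_comparison)
    show "(\<lambda>n. norm (S_alpha_term \<alpha> (Suc n))) \<longlonglongrightarrow> 0"
      using summable_LIMSEQ_zero[OF assms] by (rule tendsto_norm_zero)
    show "\<forall>\<^sub>F n in sequentially.
        norm (derangement (Suc n) / fact (Suc n) - \<alpha>) \<le> norm (S_alpha_term \<alpha> (Suc n))"
      unfolding real_norm_def abs_S_alpha_term_Suc
      by (simp add: mult_le_cancel_right1)
  qed
  then have "(\<lambda>n. derangement (Suc n) / fact (Suc n)) \<longlonglongrightarrow> \<alpha>"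
    by (simp add: LIM_zero_iff)
  moreover have "(\<lambda>n. derangement (Suc n) / fact (Suc n)) \<longlonglongrightarrow> exp (-1)"
    using derangement_div_fact_tendsto by (rule LIMSEQ_Suc)
  ultimately show ?thesis
    by (rule LIMSEQ_unique)
qed

theorem proposition1:
  fixes \<alpha> :: real
  shows "summable (\<lambda>n. S_alpha_term \<alpha> (Suc n)) \<longleftrightarrow> \<alpha> = 1 / exp 1"
proof -
  have inverse_e: "1 / exp 1 = exp (-1 :: real)"
    by (simp add: exp_minus divide_inverse)
  show ?thesis
    unfolding inverse_e
    using summable_S_alpha_term_exp_minus_one summable_S_alpha_term_imp_eq_exp_minus_one
    by blast
qed

end
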